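(* Let $\mathfrak g\neq\{0\}$ be a profinite-dimensional $\mathbb K$-Lie algebra. Then the weakly complete symmetric Hopf algebra $\mathbf U(\mathfrak g)$ contains grouplike elements different from the identity $1$.
   Context: $\mathbb K\in\{\mathbb R,\mathbb C\}$. A topological $\mathbb K$-vector space is weakly complete if it is isomorphic to a power $\mathbb K^J$ (with the product topology). A weakly complete unital algebra is a unital associative $\mathbb K$-algebra with a topology making it a weakly complete vector space with continuous multiplication; $[A]$ is $A$ with bracket $[x,y]=xy-yx$. A topological Lie algebra $\mathfrak g$ is profinite-dimensional if $\mathfrak g\cong\lim_{I}\mathfrak g/I$ over the closed ideals $I$ with $\dim\mathfrak g/I<\infty$. $\mathbf U(\mathfrak g)$ is the weakly complete enveloping algebra: a weakly complete unital algebra with a continuous Lie morphism $\lambda_{\mathfrak g}\colon\mathfrak g\to[\mathbf U(\mathfrak g)]$ (a closed embedding) such that every continuous Lie morphism $\mathfrak g\to[A]$ into a weakly complete unital algebra $A$ factors uniquely through a continuous unital algebra morphism $\mathbf U(\mathfrak g)\to A$. $\otimes_{\mathcal W}$ is the tensor product in the category of weakly complete vector spaces (for which $\mathbb K^X\otimes_{\mathcal W}\mathbb K^Y\cong\mathbb K^{X\times Y}$). $\mathbf U(\mathfrak g)$ is a weakly complete symmetric Hopf algebra with comultiplication $\gamma_{\mathfrak g}\colon\mathbf U(\mathfrak g)\to\mathbf U(\mathfrak g)\otimes_{\mathcal W}\mathbf U(\mathfrak g)$ the unique continuous algebra morphism with $\gamma_{\mathfrak g}(x)=x\otimes1+1\otimes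 x$ for $x\in\mathfrak g$, and counit $k\colon\mathbf U(\mathfrak g)\to\mathbb K$ the unique continuous unital algebra morphism vanishing on $\mathfrak g$. An element $a$ is grouplike if $\gamma_{\mathfrak g}(a)=a\otimes a$ and $k(a)=1$. *)

theory Defs
  imports "HOL-Analysis.Analysis"
begin

record ('k,'v) tvs =
  carr  :: "'v set"
  vadd  :: "'v \<Rightarrow> 'v \<Rightarrow> 'v"
  vzero :: 'v
  smul  :: "'k \<Rightarrow> 'v \<Rightarrow> 'v"
  topo  :: "'v topology"

record ('k,'v) talg = "('k,'v) tvs" +
  amul :: "'v \<Rightarrow> 'v \<Rightarrow> 'v"
  aone :: 'v

record ('k,'v) tlie = "('k,'v) tvs" +
  brk :: "'v \<Rightarrow> 'v \<Rightarrow> 'v"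

definition vsub :: "('k::field,'v,'z) tvs_scheme \<Rightarrow> 'v \<Rightarrow> 'v \<Rightarrow> 'v" where
  "vsub V x y = vadd V x (smul V (-1) y)"

definition vector_space_on :: "('k::field,'v,'z) tvs_scheme \<Rightarrow> bool" where
  "vector_space_on V \<longleftrightarrow>
     vzero V \<in> carr V \<and>
     (\<forall>x\<in>carr V. \<forall>y\<in>carr V. vadd V x y \<in> carr V) \<and>
     (\<forall>c. \<forall>x\<in>carr V. smul V c x \<in> carr V) \<and>
     (\<forall>x\<in>carr V. \<forall>y\<in>carr V. \<forall>z\<in>carr V. vadd V (vadd V x y) z = vadd V x (vadd V y z)) \<and>
     (\<forall>x\<in>carr V. \<forall>y\<in>carr V. vadd V x y = vadd V y x) \<and>
     (\<forall>x\<in>carr V. vadd V x (vzero V) = x) \<and>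
     (\<forall>x\<in>carr V. vadd V x (smul V (-1) x) = vzero V) \<and>
     (\<forall>c. \<forall>x\<in>carr V. \<forall>y\<in>carr V. smul V c (vadd V x y) = vadd V (smul V c x) (smul V c y)) \<and>
     (\<forall>c d. \<forall>x\<in>carr V. smul V (c + d) x = vadd V (smul V c x) (smul V d x)) \<and>
     (\<forall>c d. \<forall>x\<in>carr V. smul V (c * d) x = smul V c (smul V d x)) \<and>
     (\<forall>x\<in>carr V. smul V 1 x = x)"

definition tvs :: "('k::{real_normed_field},'v,'z) tvs_scheme \<Rightarrow> bool" where
  "tvs V \<longleftrightarrow> vector_space_on V \<and> topspace (topo V) = carr V \<and>
     continuous_map (prod_topology (topo V) (topo V)) (topo V) (\<lambda>(x,y). vadd V x y) \<and>
     continuous_map (prod_topology euclidean (topo V)) (topo V) (\<lambda>(c,x). smul V c x)"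

definition linear_on :: "('k::field,'v,'z) tvs_scheme \<Rightarrow> ('k,'w,'y) tvs_scheme \<Rightarrow> ('v \<Rightarrow> 'w) \<Rightarrow> bool" where
  "linear_on V W f \<longleftrightarrow> (\<forall>x\<in>carr V. f x \<in> carr W) \<and>
     (\<forall>x\<in>carr V. \<forall>y\<in>carr V. f (vadd V x y) = vadd W (f x) (f y)) \<and>
     (\<forall>c. \<forall>x\<in>carr V. f (smul V c x) = smul W c (f x))"

definition power_space :: "'j set \<Rightarrow> ('k::real_normed_field, 'j \<Rightarrow> 'k) tvs" where
  "power_space J = \<lparr> carr = PiE J (\<lambda>_. UNIV),
                      vadd = (\<lambda>f g. \<lambda>j\<in>J. f j + g j),
                      vzero = (\<lambda>j\<in>J. 0),
                      smul = (\<lambda>c f. \<lambda>j\<in>J. c * f j),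
                      topo = product_topology (\<lambda>_. euclidean) J \<rparr>"

text \<open>Weakly complete: isomorphic (as topological vector space) to some K^J.
  The index set J can always be taken inside the carrier type, since |J| <= |K^J|.\<close>
definition weakly_complete :: "('k::real_normed_field,'v,'z) tvs_scheme \<Rightarrow> bool" where
  "weakly_complete V \<longleftrightarrow> tvs V \<and>
     (\<exists>(J::'v set) f. linear_on V (power_space J) f \<and>
        bij_betw f (carr V) (carr (power_space J)) \<and>
        homeomorphic_map (topo V) (topo (power_space J)) f)"

definition wc_algebra :: "('k::real_normed_field,'v,'z) talg_scheme \<Rightarrow> bool" where
  "wc_algebra A \<longleftrightarrow> weakly_complete A \<and> aone A \<in> carr A \<and>
     (\<forall>x\<in>carr A. \<forall>y\<in>carr A. amul A x y \<in> carr A) \<and>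
     (\<forall>x\<in>carr A. \<forall>y\<in>carr A. \<forall>z\<in>carr A. amul A (amul A x y) z = amul A x (amul A y z)) \<and>
     (\<forall>x\<in>carr A. \<forall>y\<in>carr A. \<forall>z\<in>carr A. amul A (vadd A x y) z = vadd A (amul A x z) (amul A y z)) \<and>
     (\<forall>x\<in>carr A. \<forall>y\<in>carr A. \<forall>z\<in>carr A. amul A x (vadd A y z) = vadd A (amul A x y) (amul A x z)) \<and>
     (\<forall>c. \<forall>x\<in>carr A. \<forall>y\<in>carr A. amul A (smul A c x) y = smul A c (amul A x y)) \<and>
     (\<forall>c. \<forall>x\<in>carr A. \<forall>y\<in>carr A. amul A x (smul A c y) = smul A c (amul A x y)) \<and>
     (\<forall>x\<in>carr A. amul A (aone A) x = x \<and> amul A x (aone A) = x) \<and>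
     continuous_map (prod_topology (topo A) (topo A)) (topo A) (\<lambda>(x,y). amul A x y)"

definition commutator :: "('k::field,'v,'z) talg_scheme \<Rightarrow> 'v \<Rightarrow> 'v \<Rightarrow> 'v" where
  "commutator A x y = vsub A (amul A x y) (amul A y x)"

definition alg_hom :: "('k::real_normed_field,'v,'z) talg_scheme \<Rightarrow> ('k,'w,'y) talg_scheme \<Rightarrow> ('v \<Rightarrow> 'w) \<Rightarrow> bool" where
  "alg_hom A B f \<longleftrightarrow> linear_on A B f \<and> f (aone A) = aone B \<and>
     (\<forall>x\<in>carr A. \<forall>y\<in>carr A. f (amul A x y) = amul B (f x) (f y)) \<and>
     continuous_map (topo A) (topo B) f"

definition scalar_alg :: "('k::real_normed_field,'k) talg" where
  "scalar_alg = \<lparr> carr = UNIV, vadd = (+), vzero = 0, smul = (*), topo = euclidean,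
                  amul = (*), aone = 1 \<rparr>"

definition top_lie_algebra :: "('k::real_normed_field,'v,'z) tlie_scheme \<Rightarrow> bool" where
  "top_lie_algebra L \<longleftrightarrow> tvs L \<and>
     (\<forall>x\<in>carr L. \<forall>y\<in>carr L. brk L x y \<in> carr L) \<and>
     (\<forall>x\<in>carr L. \<forall>y\<in>carr L. \<forall>z\<in>carr L. brk L (vadd L x y) z = vadd L (brk L x z) (brk L y z)) \<and>
     (\<forall>x\<in>carr L. \<forall>y\<in>carr L. \<forall>z\<in>carr L. brk L x (vadd L y z) = vadd L (brk L x y) (brk L x z)) \<and>
     (\<forall>c. \<forall>x\<in>carr L. \<forall>y\<in>carr L. brk L (smul L c x) y = smul L c (brk L x y)) \<and>
     (\<forall>c. \<forall>x\<in>carr L. \<forall>y\<in>carr L. brk L x (smul L c y) = smul L c (brk L x y)) \<and>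
     (\<forall>x\<in>carr L. brk L x x = vzero L) \<and>
     (\<forall>x\<in>carr L. \<forall>y\<in>carr L. \<forall>z\<in>carr L.
        vadd L (brk L x (brk L y z)) (vadd L (brk L y (brk L z x)) (brk L z (brk L x y))) = vzero L) \<and>
     continuous_map (prod_topology (topo L) (topo L)) (topo L) (\<lambda>(x,y). brk L x y)"

primrec lcomb :: "('k::field,'v,'z) tvs_scheme \<Rightarrow> ('k \<times> 'v) list \<Rightarrow> 'v" where
  "lcomb V [] = vzero V"
| "lcomb V (p # ps) = vadd V (smul V (fst p) (snd p)) (lcomb V ps)"

definition lie_ideal :: "('k::field,'v,'z) tlie_scheme \<Rightarrow> 'v set \<Rightarrow> bool" where
  "lie_ideal L I \<longleftrightarrow> I \<subseteq> carr L \<and> vzero L \<in> I \<and>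
     (\<forall>x\<in>I. \<forall>y\<in>I. vadd L x y \<in> I) \<and> (\<forall>c. \<forall>x\<in>I. smul L c x \<in> I) \<and>
     (\<forall>x\<in>carr L. \<forall>i\<in>I. brk L x i \<in> I)"

text \<open>dim (L/I) is finite: L = span(vs) + I for a finite list vs.\<close>
definition finite_codim :: "('k::field,'v,'z) tvs_scheme \<Rightarrow> 'v set \<Rightarrow> bool" where
  "finite_codim V I \<longleftrightarrow> (\<exists>vs. set vs \<subseteq> carr V \<and>
     (\<forall>x\<in>carr V. \<exists>cs. length cs = length vs \<and> vsub V x (lcomb V (zip cs vs)) \<in> I))"

definition cofinite_ideals :: "('k::real_normed_field,'v,'z) tlie_scheme \<Rightarrow> 'v set set" where
  "cofinite_ideals L = {I. lie_ideal L I \<and> closedin (topo L) I \<and> finite_codim L I}"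

definition coset :: "('k,'v,'z) tvs_scheme \<Rightarrow> 'v \<Rightarrow> 'v set \<Rightarrow> 'v set" where
  "coset V x I = {vadd V x i | i. i \<in> I}"

text \<open>Elements of the projective limit lim_I L/I (families of cosets, compatible
  under the quotient maps L/J -> L/I for J \<subseteq> I).\<close>
definition proj_limit :: "('k::real_normed_field,'v,'z) tlie_scheme \<Rightarrow> ('v set \<Rightarrow> 'v set) set" where
  "proj_limit L = {F. (\<forall>I\<in>cofinite_ideals L. \<exists>y\<in>carr L. F I = coset L y I) \<and>
      (\<forall>I\<in>cofinite_ideals L. \<forall>J\<in>cofinite_ideals L. J \<subseteq> I \<longrightarrow> F J \<subseteq> F I)}"

text \<open>Profinite-dimensional: the canonical map L -> lim L/I is a bijection (hence an
  isomorphism of Lie algebras, the limit structure being pointwise) and a homeomorphism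
  for the limit topology, i.e. the initial topology of the quotient maps L -> L/I
  (L/I with the quotient topology); its opens pulled back to L are the I-saturated opens.\<close>
definition profinite_dim_lie :: "('k::real_normed_field,'v,'z) tlie_scheme \<Rightarrow> bool" where
  "profinite_dim_lie L \<longleftrightarrow> top_lie_algebra L \<and>
     (\<forall>F\<in>proj_limit L. \<exists>!x. x \<in> carr L \<and> (\<forall>I\<in>cofinite_ideals L. F I = coset L x I)) \<and>
     topo L = topology_generated_by
        {S. openin (topo L) S \<and> (\<exists>I\<in>cofinite_ideals L. \<forall>x\<in>S. \<forall>i\<in>I. vadd L x i \<in> S)}"

definition lie_morphism_into :: "('k::real_normed_field,'v,'z) tlie_scheme \<Rightarrow> ('k,'w,'y) talg_scheme \<Rightarrow> ('v \<Rightarrow> 'w) \<Rightarrow> bool" where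
  "lie_morphism_into L A f \<longleftrightarrow> linear_on L A f \<and>
     (\<forall>x\<in>carr L. \<forall>y\<in>carr L. f (brk L x y) = commutator A (f x) (f y)) \<and>
     continuous_map (topo L) (topo A) f"

text \<open>U with lambda is the weakly complete enveloping algebra of L. The universal
  property is quantified over weakly complete unital algebras carried by the type of U.\<close>
definition enveloping_algebra :: "('k::real_normed_field,'v,'z) tlie_scheme \<Rightarrow> ('k,'u) talg \<Rightarrow> ('v \<Rightarrow> 'u) \<Rightarrow> bool" where
  "enveloping_algebra L U lam \<longleftrightarrow> wc_algebra U \<and> lie_morphism_into L U lam \<and>
     inj_on lam (carr L) \<and> closedin (topo U) (lam ` carr L) \<and>
     homeomorphic_map (topo L) (subtopology (topo U) (lam ` carr L)) lam \<and>
     (\<forall>(A::('k,'u) talg) f. wc_algebra A \<and> lie_morphism_into L A f \<longrightarrow>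
        (\<exists>\<phi>. alg_hom U A \<phi> \<and> (\<forall>x\<in>carr L. \<phi> (lam x) = f x)) \<and>
        (\<forall>\<phi> \<psi>. alg_hom U A \<phi> \<and> (\<forall>x\<in>carr L. \<phi> (lam x) = f x) \<and>
                 alg_hom U A \<psi> \<and> (\<forall>x\<in>carr L. \<psi> (lam x) = f x) \<longrightarrow>
                 (\<forall>u\<in>carr U. \<phi> u = \<psi> u)))"

definition cont_bilinear :: "('k::real_normed_field,'u,'z) tvs_scheme \<Rightarrow> ('k,'w,'y) tvs_scheme \<Rightarrow> ('u \<Rightarrow> 'u \<Rightarrow> 'w) \<Rightarrow> bool" where
  "cont_bilinear U W b \<longleftrightarrow> (\<forall>x\<in>carr U. \<forall>y\<in>carr U. b x y \<in> carr W) \<and>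
     (\<forall>x\<in>carr U. linear_on U W (b x)) \<and> (\<forall>y\<in>carr U. linear_on U W (\<lambda>x. b x y)) \<and>
     continuous_map (prod_topology (topo U) (topo U)) (topo W) (\<lambda>(x,y). b x y)"

text \<open>T with tens is the tensor product U \<otimes>_W U in the category of weakly complete
  spaces (universal for continuous bilinear maps into weakly complete spaces carried by
  the type of T), equipped with its algebra structure (a\<otimes>b)(c\<otimes>d) = ac\<otimes>bd, 1 = 1\<otimes>1.\<close>
definition wc_tensor_algebra :: "('k::real_normed_field,'u) talg \<Rightarrow> ('k,'t) talg \<Rightarrow> ('u \<Rightarrow> 'u \<Rightarrow> 't) \<Rightarrow> bool" where
  "wc_tensor_algebra U T tens \<longleftrightarrow> wc_algebra T \<and> cont_bilinear U T tens \<and>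
     (\<forall>(W::('k,'t) tvs) b. weakly_complete W \<and> cont_bilinear U W b \<longrightarrow>
        (\<exists>\<phi>. linear_on T W \<phi> \<and> continuous_map (topo T) (topo W) \<phi> \<and>
              (\<forall>x\<in>carr U. \<forall>y\<in>carr U. \<phi> (tens x y) = b x y)) \<and>
        (\<forall>\<phi> \<psi>. linear_on T W \<phi> \<and> continuous_map (topo T) (topo W) \<phi> \<and>
                 (\<forall>x\<in>carr U. \<forall>y\<in>carr U. \<phi> (tens x y) = b x y) \<and>
                 linear_on T W \<psi> \<and> continuous_map (topo T) (topo W) \<psi> \<and>
                 (\<forall>x\<in>carr U. \<forall>y\<in>carr U. \<psi> (tens x y) = b x y) \<longrightarrow>
                 (\<forall>t\<in>carr T. \<phi> t = \<psi> t))) \<and>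
     aone T = tens (aone U) (aone U) \<and>
     (\<forall>a\<in>carr U. \<forall>b\<in>carr U. \<forall>c\<in>carr U. \<forall>d\<in>carr U.
        amul T (tens a b) (tens c d) = tens (amul U a c) (amul U b d))"

end

theory Submission
  imports Defs
begin

text \<open>Take \<open>x \<noteq> 0\<close> in g. Its image in U(g), and every multiple \<open>t x\<close> of it, is primitive and
  killed by the counit. Identify U(g) with \<open>K\<^sup>J\<close>: every continuous linear functional, and every
  coordinate of the continuous multiplication, depends on finitely many coordinates only. Hence the
  coordinates of the powers \<open>x\<^sup>n\<close> grow at most geometrically and \<open>exp x = \<Sum> x\<^sup>n / n!\<close> converges
  coordinatewise. Continuous linear maps commute with such series, so the binomial formula for
  \<open>\<gamma>(x\<^sup>n)\<close> and a Cauchy product give \<open>\<gamma>(exp x) = exp x \<otimes> exp x\<close>, and the counit sends \<open>exp x\<close>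
  to \<open>e\<^sup>0 = 1\<close>. Finally, a coordinate of \<open>exp (t x)\<close> is a power series in \<open>t\<close> whose derivative
  at \<open>0\<close> is the corresponding coordinate of \<open>x\<close>, so \<open>exp (t x) \<noteq> 1\<close> for some \<open>t\<close>.\<close>

lemma continuous_map_mult_euclidean:
  fixes f g :: "'a \<Rightarrow> 'k::real_normed_field"
  assumes "continuous_map X euclidean f" "continuous_map X euclidean g"
  shows "continuous_map X euclidean (\<lambda>x. f x * g x)"
  using assms by (simp add: continuous_map_atin tendsto_mult)

lemma continuous_map_fix_left:
  assumes "continuous_map (prod_topology X Y) Z (\<lambda>(x, y). h x y)" "a \<in> topspace X"
  shows "continuous_map Y Z (h a)"
proof -
  have "continuous_map Y X (\<lambda>y. a)"
    using assms(2) by simp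
  from continuous_map_pairedI[OF this continuous_map_id]
  have "continuous_map Y (prod_topology X Y) (\<lambda>y. (a, y))"
    by simp
  from continuous_map_compose[OF this assms(1)] show ?thesis
    by (simp add: o_def)
qed

lemma continuous_map_fix_right:
  assumes "continuous_map (prod_topology X Y) Z (\<lambda>(x, y). h x y)" "b \<in> topspace Y"
  shows "continuous_map X Z (\<lambda>x. h x b)"
proof -
  have "continuous_map X Y (\<lambda>x. b)"
    using assms(2) by simp
  from continuous_map_pairedI[OF continuous_map_id this]
  have "continuous_map X (prod_topology X Y) (\<lambda>x. (x, b))"
    by simp
  from continuous_map_compose[OF this assms(1)] show ?thesis
    by (simp add: o_def)
qed

lemma vector_space_on_smul_zero:
  assumes "vector_space_on V" "x \<in> carr V"
  shows "smul V 0 x = vzero V"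
proof -
  let ?y = "smul V 0 x"
  have y: "?y \<in> carr V" using assms unfolding vector_space_on_def by blast
  have yy: "vadd V ?y ?y = ?y"
    using assms unfolding vector_space_on_def by (metis add_0)
  have m: "smul V (-1) ?y \<in> carr V" using assms y unfolding vector_space_on_def by blast
  have "vadd V (vadd V ?y ?y) (smul V (-1) ?y) = vadd V ?y (vadd V ?y (smul V (-1) ?y))"
    using assms y m unfolding vector_space_on_def by blast
  also have "\<dots> = ?y" using assms y unfolding vector_space_on_def by metis
  finally show ?thesis using yy assms y unfolding vector_space_on_def by metis
qed

lemma binomial_sum_Suc:
  fixes q :: "nat \<Rightarrow> nat \<Rightarrow> 'a::comm_semiring_1"
  shows "(\<Sum>k\<le>Suc n. of_nat (Suc n choose k) * q k (Suc n - k))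
       = (\<Sum>k\<le>n. of_nat (n choose k) * (q (Suc k) (n - k) + q k (Suc n - k)))"
proof -
  have shift: "(\<Sum>k\<le>n. of_nat (n choose k) * q k (Suc n - k))
      = q 0 (Suc n) + (\<Sum>k\<le>n. of_nat (n choose Suc k) * q (Suc k) (n - k))"
  proof (cases n)
    case (Suc m)
    have "(\<Sum>k\<le>Suc m. of_nat (Suc m choose k) * q k (Suc (Suc m) - k))
        = q 0 (Suc (Suc m)) + (\<Sum>k\<le>m. of_nat (Suc m choose Suc k) * q (Suc k) (Suc m - k))"
      by (subst sum.atMost_Suc_shift) simp
    moreover have "(\<Sum>k\<le>Suc m. of_nat (Suc m choose Suc k) * q (Suc k) (Suc m - k))
        = (\<Sum>k\<le>m. of_nat (Suc m choose Suc k) * q (Suc k) (Suc m - k))"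
      by (subst sum.atMost_Suc) (simp add: binomial_eq_0)
    ultimately show ?thesis
      using Suc by simp
  qed simp
  have "(\<Sum>k\<le>Suc n. of_nat (Suc n choose k) * q k (Suc n - k))
      = q 0 (Suc n) + (\<Sum>k\<le>n. of_nat (n choose k) * q (Suc k) (n - k))
                    + (\<Sum>k\<le>n. of_nat (n choose Suc k) * q (Suc k) (n - k))"
    by (subst sum.atMost_Suc_shift) (simp add: sum.distrib distrib_right add.assoc)
  also have "\<dots> = (\<Sum>k\<le>n. of_nat (n choose k) * (q (Suc k) (n - k) + q k (Suc n - k)))"
    by (simp add: shift sum.distrib distrib_left algebra_simps)
  finally show ?thesis .
qed

locale wc_coords =
  fixes V :: "('k::{real_normed_field,banach},'v,'z) tvs_scheme"
    and J :: "'j set" and f :: "'v \<Rightarrow> 'j \<Rightarrow> 'k"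
  assumes tvs: "tvs V"
    and coords_linear: "linear_on V (power_space J) f"
    and coords_bij: "bij_betw f (carr V) (carr (power_space J))"
    and coords_homeo: "homeomorphic_map (topo V) (topo (power_space J)) f"
begin

lemma vector_space: "vector_space_on V"
  using tvs unfolding tvs_def by blast

lemma topspace_eq: "topspace (topo V) = carr V"
  using tvs unfolding tvs_def by blast

lemma zero_in: "vzero V \<in> carr V"
  using vector_space unfolding vector_space_on_def by blast

lemma add_in: "a \<in> carr V \<Longrightarrow> b \<in> carr V \<Longrightarrow> vadd V a b \<in> carr V"
  using vector_space by (simp add: vector_space_on_def)

lemma smul_in: "a \<in> carr V \<Longrightarrow> smul V c a \<in> carr V"
  using vector_space by (simp add: vector_space_on_def)

lemma smul_zero: "a \<in> carr V \<Longrightarrow> smul V 0 a = vzero V"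
  by (rule vector_space_on_smul_zero[OF vector_space])

lemma coords_in: "a \<in> carr V \<Longrightarrow> f a \<in> PiE J (\<lambda>_. UNIV)"
  using coords_linear unfolding linear_on_def power_space_def by auto

lemma coord_add: "a \<in> carr V \<Longrightarrow> b \<in> carr V \<Longrightarrow> j \<in> J \<Longrightarrow> f (vadd V a b) j = f a j + f b j"
  using coords_linear unfolding linear_on_def power_space_def by auto

lemma coord_smul: "a \<in> carr V \<Longrightarrow> j \<in> J \<Longrightarrow> f (smul V c a) j = c * f a j"
  using coords_linear unfolding linear_on_def power_space_def by auto

lemma coord_zero: "j \<in> J \<Longrightarrow> f (vzero V) j = 0"
  using coord_smul[OF zero_in, of j 0] smul_zero[OF zero_in] by simp

lemma coords_eqI:
  assumes "a \<in> carr V" "b \<in> carr V" "\<And>j. j \<in> J \<Longrightarrow> f a j = f b j"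
  shows "a = b"
proof -
  have "f a = f b"
    using assms coords_in by (meson PiE_ext)
  then show ?thesis
    using coords_bij assms(1,2) unfolding bij_betw_def inj_on_def by blast
qed

lemma continuous_coord: "j \<in> J \<Longrightarrow> continuous_map (topo V) euclidean (\<lambda>a. f a j)"
proof -
  assume j: "j \<in> J"
  have "continuous_map (topo V) (product_topology (\<lambda>_. euclidean) J) f"
    using homeomorphic_imp_continuous_map[OF coords_homeo] by (simp add: power_space_def)
  from continuous_map_compose[OF this continuous_map_product_projection[OF j]]
  show ?thesis by (simp add: o_def)
qed

lemma continuous_smul_left: "a \<in> carr V \<Longrightarrow> continuous_map euclidean (topo V) (\<lambda>s. smul V s a)"
proof -
  assume a: "a \<in> carr V"
  have "continuous_map (prod_topology euclidean (topo V)) (topo V) (\<lambda>(c, x). smul V c x)"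
    using tvs unfolding tvs_def by blast
  from continuous_map_fix_right[OF this] show ?thesis
    using a topspace_eq by simp
qed

definition of_coords :: "('j \<Rightarrow> 'k) \<Rightarrow> 'v" where
  "of_coords p = inv_into (carr V) f (restrict p J)"

lemma of_coords_in: "of_coords p \<in> carr V"
  and coord_of_coords: "j \<in> J \<Longrightarrow> f (of_coords p) j = p j"
proof -
  have "restrict p J \<in> f ` carr V"
    using coords_bij unfolding bij_betw_def power_space_def by simp
  then show "of_coords p \<in> carr V" "j \<in> J \<Longrightarrow> f (of_coords p) j = p j"
    unfolding of_coords_def by (auto simp: inv_into_into f_inv_into_f)
qed

definition basis_vec :: "'j \<Rightarrow> 'v" where
  "basis_vec g = of_coords (\<lambda>j. if j = g then 1 else 0)"

lemma basis_vec_in: "basis_vec g \<in> carr V"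
  unfolding basis_vec_def by (rule of_coords_in)

lemma coord_basis_vec: "j \<in> J \<Longrightarrow> f (basis_vec g) j = (if j = g then 1 else 0)"
  unfolding basis_vec_def by (rule coord_of_coords)

lemma continuous_bihom_finite_support:
  fixes \<beta> :: "'v \<Rightarrow> 'w \<Rightarrow> 'k" and W :: "'w topology" and sc :: "'k \<Rightarrow> 'w \<Rightarrow> 'w"
  assumes cont: "continuous_map (prod_topology (topo V) W) euclidean (\<lambda>(a, z). \<beta> a z)"
    and hom_left: "\<And>c a z. a \<in> carr V \<Longrightarrow> z \<in> topspace W \<Longrightarrow> \<beta> (smul V c a) z = c * \<beta> a z"
    and hom_right: "\<And>s a z. a \<in> carr V \<Longrightarrow> z \<in> topspace W \<Longrightarrow> \<beta> a (sc s z) = s * \<beta> a z"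
    and sc_cont: "\<And>z. z \<in> topspace W \<Longrightarrow> continuous_map euclidean W (\<lambda>s. sc s z)"
    and sc_zero: "\<And>z. z \<in> topspace W \<Longrightarrow> sc 0 z = base"
    and base: "base \<in> topspace W"
  shows "\<exists>F. finite F \<and> F \<subseteq> J \<and>
           (\<forall>a\<in>carr V. \<forall>z\<in>topspace W. (\<forall>g\<in>F. f a g = 0) \<longrightarrow> \<beta> a z = 0)"
proof -
  define S where "S = {x \<in> topspace (prod_topology (topo V) W). (\<lambda>(a, z). \<beta> a z) x \<in> ball 0 1}"
  have S_open: "openin (prod_topology (topo V) W) S"
    unfolding S_def by (rule openin_continuous_map_preimage[OF cont]) simp
  have "\<beta> (vzero V) base = 0"
    using hom_left[OF zero_in base, of 0] smul_zero[OF zero_in] by simp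
  then have "(vzero V, base) \<in> S"
    unfolding S_def using base zero_in topspace_eq by simp
  from openin_prod_topology_alt[THEN iffD1, OF S_open, rule_format, OF this]
  obtain U1 V1 where U1: "openin (topo V) U1" and V1: "openin W V1"
    and in01: "vzero V \<in> U1" "base \<in> V1" and sub: "U1 \<times> V1 \<subseteq> S"
    by blast
  have U1_sub: "U1 \<subseteq> carr V"
    using openin_subset[OF U1] topspace_eq by simp
  have fU1_open: "openin (product_topology (\<lambda>_. euclidean) J) (f ` U1)"
    using homeomorphic_map_openness[OF coords_homeo openin_subset[OF U1]] U1
    by (simp add: power_space_def)
  have "f (vzero V) \<in> f ` U1"
    using in01(1) by simp
  then obtain X where X: "f (vzero V) \<in> PiE J X" "finite {i. X i \<noteq> topspace euclidean}"
      "PiE J X \<subseteq> f ` U1"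
    using product_topology_open_contains_basis[OF fU1_open] by metis
  define F where "F = {i. X i \<noteq> UNIV} \<inter> J"
  have X0: "j \<in> J \<Longrightarrow> 0 \<in> X j" for j
    using X(1) coord_zero by (auto simp: PiE_iff)
  txt \<open>If \<open>\<beta> a z \<noteq> 0\<close> while \<open>a\<close> vanishes on \<open>F\<close>, the rescaled pair \<open>(r a, sc s z)\<close> still lies in
    \<open>U1 \<times> V1\<close> but has \<open>\<beta>\<close>-value \<open>1\<close>.\<close>
  have "\<beta> a z = 0" if a: "a \<in> carr V" and z: "z \<in> topspace W" and aF: "\<forall>g\<in>F. f a g = 0" for a z
  proof (rule ccontr)
    assume nz: "\<beta> a z \<noteq> 0"
    have "openin euclidean {s \<in> topspace euclidean. sc s z \<in> V1}"
      by (rule openin_continuous_map_preimage[OF sc_cont[OF z] V1])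
    then have "open {s. sc s z \<in> V1}"
      by simp
    moreover have "(0::'k) \<in> {s. sc s z \<in> V1}"
      using sc_zero[OF z] in01(2) by simp
    ultimately obtain \<epsilon> where \<epsilon>: "\<epsilon> > 0" "ball 0 \<epsilon> \<subseteq> {s. sc s z \<in> V1}"
      using open_contains_ball by blast
    define s :: 'k where "s = of_real (\<epsilon> / 2)"
    have "s \<in> ball 0 \<epsilon>"
      unfolding s_def using \<epsilon>(1) by simp
    then have sV1: "sc s z \<in> V1"
      using \<epsilon>(2) by blast
    have s0: "s \<noteq> 0"
      using \<epsilon>(1) unfolding s_def by simp
    define r where "r = inverse (s * \<beta> a z)"
    have "r * f a j \<in> X j" if "j \<in> J" for j
      using that aF X0 unfolding F_def by (cases "j \<in> F") (auto simp: F_def)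
    then have "f (smul V r a) \<in> PiE J X"
      using coords_in[OF smul_in[OF a]] coord_smul[OF a] by (simp add: PiE_iff)
    then obtain u where u: "u \<in> U1" "f u = f (smul V r a)"
      using X(3) by (metis imageE subsetD)
    have "u = smul V r a"
      by (rule coords_eqI) (use u U1_sub smul_in[OF a] in auto)
    then have "(smul V r a, sc s z) \<in> S"
      using sub u(1) sV1 by blast
    then have "norm (\<beta> (smul V r a) (sc s z)) < 1"
      unfolding S_def by simp
    moreover have "\<beta> (smul V r a) (sc s z) = 1"
      using hom_right[OF smul_in[OF a] z] hom_left[OF a z] s0 nz unfolding r_def
      by (simp add: field_simps)
    ultimately show False by simp
  qed
  moreover have "finite F"
    using X(2) unfolding F_def by simp
  ultimately show ?thesis
    unfolding F_def by blast
qed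

lemma continuous_bihom_finite_expansion:
  fixes \<beta> :: "'v \<Rightarrow> 'w \<Rightarrow> 'k" and W :: "'w topology" and sc :: "'k \<Rightarrow> 'w \<Rightarrow> 'w"
  assumes cont: "continuous_map (prod_topology (topo V) W) euclidean (\<lambda>(a, z). \<beta> a z)"
    and add_left: "\<And>a b z. a \<in> carr V \<Longrightarrow> b \<in> carr V \<Longrightarrow> z \<in> topspace W \<Longrightarrow>
                      \<beta> (vadd V a b) z = \<beta> a z + \<beta> b z"
    and hom_left: "\<And>c a z. a \<in> carr V \<Longrightarrow> z \<in> topspace W \<Longrightarrow> \<beta> (smul V c a) z = c * \<beta> a z"
    and hom_right: "\<And>s a z. a \<in> carr V \<Longrightarrow> z \<in> topspace W \<Longrightarrow> \<beta> a (sc s z) = s * \<beta> a z"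
    and sc_cont: "\<And>z. z \<in> topspace W \<Longrightarrow> continuous_map euclidean W (\<lambda>s. sc s z)"
    and sc_zero: "\<And>z. z \<in> topspace W \<Longrightarrow> sc 0 z = base"
    and base: "base \<in> topspace W"
  shows "\<exists>F. finite F \<and> F \<subseteq> J \<and>
           (\<forall>a\<in>carr V. \<forall>z\<in>topspace W. \<beta> a z = (\<Sum>g\<in>F. f a g * \<beta> (basis_vec g) z))"
proof -
  obtain F where F: "finite F" "F \<subseteq> J"
    and vanish: "\<And>a z. a \<in> carr V \<Longrightarrow> z \<in> topspace W \<Longrightarrow> \<forall>g\<in>F. f a g = 0 \<Longrightarrow> \<beta> a z = 0"
    using continuous_bihom_finite_support[OF cont hom_left hom_right sc_cont sc_zero base] by metis
  define part where "part G a = of_coords (\<lambda>j. if j \<in> G then f a j else 0)" for G a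
  have part_in: "part G a \<in> carr V" for G a
    unfolding part_def by (rule of_coords_in)
  have part_expansion: "\<beta> (part G a) z = (\<Sum>g\<in>G. f a g * \<beta> (basis_vec g) z)"
    if "finite G" "G \<subseteq> J" and z: "z \<in> topspace W" for G a z
    using that(1,2)
  proof (induction G rule: finite_induct)
    case empty
    have "part {} a = vzero V"
      by (rule coords_eqI[OF part_in zero_in]) (simp add: part_def coord_of_coords coord_zero)
    then show ?case
      using hom_left[OF zero_in z, of 0] smul_zero[OF zero_in] by simp
  next
    case (insert h G)
    have "part (insert h G) a = vadd V (smul V (f a h) (basis_vec h)) (part G a)"
      using insert(2)
      by (intro coords_eqI part_in add_in smul_in basis_vec_in)
         (auto simp: part_def coord_add coord_smul smul_in basis_vec_in of_coords_in
                     coord_basis_vec coord_of_coords)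
    then show ?case
      using insert by (simp add: add_left[OF smul_in[OF basis_vec_in] part_in z] hom_left[OF basis_vec_in z])
  qed
  have "\<beta> a z = (\<Sum>g\<in>F. f a g * \<beta> (basis_vec g) z)" if a: "a \<in> carr V" and z: "z \<in> topspace W" for a z
  proof -
    define rest where "rest = of_coords (\<lambda>j. if j \<in> F then 0 else f a j)"
    have rest_in: "rest \<in> carr V"
      unfolding rest_def by (rule of_coords_in)
    have "a = vadd V (part F a) rest"
      by (rule coords_eqI[OF a add_in[OF part_in rest_in]])
         (simp add: part_def rest_def coord_add of_coords_in coord_of_coords)
    then have "\<beta> a z = \<beta> (part F a) z + \<beta> rest z"
      using add_left[OF part_in rest_in z] by metis
    moreover have "\<beta> rest z = 0"
      by (rule vanish[OF rest_in z]) (use F(2) in \<open>auto simp: rest_def coord_of_coords\<close>)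
    ultimately show ?thesis
      using part_expansion[OF F z] by simp
  qed
  then show ?thesis
    using F by blast
qed

lemma continuous_functional_finite_expansion:
  fixes \<phi> :: "'v \<Rightarrow> 'k"
  assumes cont: "continuous_map (topo V) euclidean \<phi>"
    and add: "\<And>a b. a \<in> carr V \<Longrightarrow> b \<in> carr V \<Longrightarrow> \<phi> (vadd V a b) = \<phi> a + \<phi> b"
    and hom: "\<And>c a. a \<in> carr V \<Longrightarrow> \<phi> (smul V c a) = c * \<phi> a"
  shows "\<exists>F. finite F \<and> F \<subseteq> J \<and> (\<forall>a\<in>carr V. \<phi> a = (\<Sum>g\<in>F. f a g * \<phi> (basis_vec g)))"
proof -
  have "continuous_map (prod_topology (topo V) euclidean) euclidean (\<lambda>x. snd x * \<phi> (fst x))"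
    by (intro continuous_map_mult_euclidean continuous_map_snd
        continuous_map_compose[OF continuous_map_fst cont, unfolded o_def])
  then have "continuous_map (prod_topology (topo V) euclidean) euclidean (\<lambda>(a, z). z * \<phi> a)"
    by (simp add: split_def)
  then have "\<exists>F. finite F \<and> F \<subseteq> J \<and>
      (\<forall>a\<in>carr V. \<forall>z\<in>topspace euclidean. z * \<phi> a = (\<Sum>g\<in>F. f a g * (z * \<phi> (basis_vec g))))"
  proof (rule continuous_bihom_finite_expansion[where sc = "(*)" and base = 0])
    show "continuous_map euclidean euclidean (\<lambda>s. s * z)" for z :: 'k
      by (simp add: continuous_on_mult_right continuous_on_id)
  qed (simp_all add: add hom distrib_left mult.left_commute)
  then obtain F where F: "finite F" "F \<subseteq> J"
    and "\<forall>a\<in>carr V. \<forall>z::'k. z * \<phi> a = (\<Sum>g\<in>F. f a g * (z * \<phi> (basis_vec g)))"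
    by auto
  then have "\<forall>a\<in>carr V. \<phi> a = (\<Sum>g\<in>F. f a g * \<phi> (basis_vec g))"
    by (metis (no_types, lifting) mult_1 sum.cong)
  then show ?thesis
    using F by blast
qed

lemma continuous_functional_coordinate_series:
  fixes \<phi> :: "'v \<Rightarrow> 'k"
  assumes cont: "continuous_map (topo V) euclidean \<phi>"
    and add: "\<And>a b. a \<in> carr V \<Longrightarrow> b \<in> carr V \<Longrightarrow> \<phi> (vadd V a b) = \<phi> a + \<phi> b"
    and hom: "\<And>c a. a \<in> carr V \<Longrightarrow> \<phi> (smul V c a) = c * \<phi> a"
    and s: "\<And>n. s n \<in> carr V"
    and summable: "\<And>j. j \<in> J \<Longrightarrow> summable (\<lambda>n. norm (f (s n) j * w n))"
  shows "summable (\<lambda>n. norm (\<phi> (s n) * w n))"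
    and "\<phi> (of_coords (\<lambda>j. \<Sum>n. f (s n) j * w n)) = (\<Sum>n. \<phi> (s n) * w n)"
proof -
  obtain F where F: "finite F" "F \<subseteq> J"
    and expansion: "\<And>a. a \<in> carr V \<Longrightarrow> \<phi> a = (\<Sum>g\<in>F. f a g * \<phi> (basis_vec g))"
    using continuous_functional_finite_expansion[OF cont add hom] by metis
  have summable_F: "summable (\<lambda>n. f (s n) g * w n)" if "g \<in> F" for g
    using summable_norm_cancel[OF summable] that F by blast
  have term_expansion: "\<phi> (s n) * w n = (\<Sum>g\<in>F. f (s n) g * w n * \<phi> (basis_vec g))" for n
    by (subst expansion[OF s]) (simp add: sum_distrib_left sum_distrib_right algebra_simps)
  have "summable (\<lambda>n. \<Sum>g\<in>F. norm (f (s n) g * w n) * norm (\<phi> (basis_vec g)))"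
  proof (rule summable_sum)
    show "summable (\<lambda>n. norm (f (s n) g * w n) * norm (\<phi> (basis_vec g)))" if "g \<in> F" for g
      using that F by (intro summable_mult2 summable) blast
  qed
  then show "summable (\<lambda>n. norm (\<phi> (s n) * w n))"
  proof (rule summable_comparison_test[rotated], intro exI allI impI)
    fix n
    have "norm (norm (\<phi> (s n) * w n)) \<le> (\<Sum>g\<in>F. norm (f (s n) g * w n * \<phi> (basis_vec g)))"
      unfolding term_expansion by (simp add: norm_sum)
    then show "norm (norm (\<phi> (s n) * w n)) \<le> (\<Sum>g\<in>F. norm (f (s n) g * w n) * norm (\<phi> (basis_vec g)))"
      by (simp add: norm_mult)
  qed
  have "\<phi> (of_coords (\<lambda>j. \<Sum>n. f (s n) j * w n))
      = (\<Sum>g\<in>F. (\<Sum>n. f (s n) g * w n) * \<phi> (basis_vec g))"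
    using F by (auto simp: expansion[OF of_coords_in] coord_of_coords intro!: sum.cong)
  also have "\<dots> = (\<Sum>g\<in>F. \<Sum>n. f (s n) g * w n * \<phi> (basis_vec g))"
    by (rule sum.cong[OF refl], rule suminf_mult2[OF summable_F])
  also have "\<dots> = (\<Sum>n. \<Sum>g\<in>F. f (s n) g * w n * \<phi> (basis_vec g))"
    by (rule suminf_sum[symmetric], rule summable_mult2[OF summable_F])
  also have "\<dots> = (\<Sum>n. \<phi> (s n) * w n)"
    by (simp only: term_expansion)
  finally show "\<phi> (of_coords (\<lambda>j. \<Sum>n. f (s n) j * w n)) = (\<Sum>n. \<phi> (s n) * w n)" .
qed

end

lemma linear_recurrence_norm_bound:
  fixes u :: "nat \<Rightarrow> 'j \<Rightarrow> 'k::real_normed_field" and c :: "'j \<Rightarrow> 'j \<Rightarrow> 'k"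
  assumes "finite F"
    and recurrence: "\<And>n g. g \<in> F \<Longrightarrow> u (Suc n) g = (\<Sum>g'\<in>F. c g g' * u n g')"
  shows "(\<Sum>g\<in>F. norm (u n g)) \<le> (\<Sum>g\<in>F. norm (u 0 g)) * (\<Sum>g\<in>F. \<Sum>g'\<in>F. norm (c g g')) ^ n"
proof (induction n)
  case (Suc n)
  define K where "K n = (\<Sum>g\<in>F. norm (u n g))" for n
  define R where "R = (\<Sum>g\<in>F. \<Sum>g'\<in>F. norm (c g g'))"
  have R_nonneg: "R \<ge> 0"
    unfolding R_def by (intro sum_nonneg) auto
  have entry_le: "norm (u n g') \<le> K n" if "g' \<in> F" for g'
    unfolding K_def using assms(1) that by (intro member_le_sum) auto
  have "K (Suc n) \<le> (\<Sum>g\<in>F. \<Sum>g'\<in>F. norm (c g g' * u n g'))"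
    unfolding K_def by (intro sum_mono) (simp add: recurrence norm_sum)
  also have "\<dots> \<le> (\<Sum>g\<in>F. \<Sum>g'\<in>F. norm (c g g') * K n)"
    by (intro sum_mono) (simp add: norm_mult mult_left_mono entry_le)
  also have "\<dots> = R * K n"
    unfolding R_def by (simp add: sum_distrib_right)
  also have "\<dots> \<le> R * (K 0 * R ^ n)"
    using Suc R_nonneg unfolding K_def R_def by (intro mult_left_mono) auto
  finally show ?case
    unfolding K_def R_def by (simp add: algebra_simps)
qed simp

primrec apow :: "('k, 'v, 'z) talg_scheme \<Rightarrow> 'v \<Rightarrow> nat \<Rightarrow> 'v" where
  "apow A x 0 = aone A"
| "apow A x (Suc n) = amul A x (apow A x n)"

locale wc_algebra_coords = wc_coords A J f
  for A :: "('k::{real_normed_field,banach},'v,'z) talg_scheme" and J :: "'j set" and f +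
  assumes wc_algebra: "wc_algebra A"
begin

lemma one_in: "aone A \<in> carr A"
  using wc_algebra unfolding wc_algebra_def by blast

lemma mul_in: "x \<in> carr A \<Longrightarrow> y \<in> carr A \<Longrightarrow> amul A x y \<in> carr A"
  using wc_algebra by (simp add: wc_algebra_def)

lemma mul_assoc:
  "x \<in> carr A \<Longrightarrow> y \<in> carr A \<Longrightarrow> z \<in> carr A \<Longrightarrow> amul A (amul A x y) z = amul A x (amul A y z)"
  using wc_algebra by (simp add: wc_algebra_def)

lemma mul_add_left:
  "x \<in> carr A \<Longrightarrow> y \<in> carr A \<Longrightarrow> z \<in> carr A \<Longrightarrow> amul A (vadd A x y) z = vadd A (amul A x z) (amul A y z)"
  using wc_algebra by (simp add: wc_algebra_def)

lemma mul_add_right: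
  "x \<in> carr A \<Longrightarrow> y \<in> carr A \<Longrightarrow> z \<in> carr A \<Longrightarrow> amul A x (vadd A y z) = vadd A (amul A x y) (amul A x z)"
  using wc_algebra by (simp add: wc_algebra_def)

lemma mul_smul_left: "x \<in> carr A \<Longrightarrow> y \<in> carr A \<Longrightarrow> amul A (smul A c x) y = smul A c (amul A x y)"
  using wc_algebra by (simp add: wc_algebra_def)

lemma mul_smul_right: "x \<in> carr A \<Longrightarrow> y \<in> carr A \<Longrightarrow> amul A x (smul A c y) = smul A c (amul A x y)"
  using wc_algebra by (simp add: wc_algebra_def)

lemma one_mul: "x \<in> carr A \<Longrightarrow> amul A (aone A) x = x"
  using wc_algebra by (simp add: wc_algebra_def)

lemma mul_one: "x \<in> carr A \<Longrightarrow> amul A x (aone A) = x"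
  using wc_algebra by (simp add: wc_algebra_def)

lemma continuous_mul: "continuous_map (prod_topology (topo A) (topo A)) (topo A) (\<lambda>(x, y). amul A x y)"
  using wc_algebra by (simp add: wc_algebra_def)

lemma apow_in: "x \<in> carr A \<Longrightarrow> apow A x n \<in> carr A"
  by (induction n) (simp_all add: one_in mul_in)

lemma apow_smul: "x \<in> carr A \<Longrightarrow> apow A (smul A t x) n = smul A (t ^ n) (apow A x n)"
proof (induction n)
  case 0
  then show ?case
    using vector_space one_in by (simp add: vector_space_on_def)
next
  case (Suc n)
  have "apow A (smul A t x) (Suc n) = amul A (smul A t x) (smul A (t ^ n) (apow A x n))"
    using Suc by simp
  also have "\<dots> = smul A t (amul A x (smul A (t ^ n) (apow A x n)))"
    using Suc.prems by (simp add: mul_smul_left smul_in apow_in)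
  also have "\<dots> = smul A t (smul A (t ^ n) (amul A x (apow A x n)))"
    using Suc.prems by (simp only: mul_smul_right apow_in)
  also have "\<dots> = smul A (t ^ Suc n) (amul A x (apow A x n))"
    using vector_space mul_in[OF Suc.prems apow_in[OF Suc.prems]] by (simp add: vector_space_on_def)
  finally show ?case
    by simp
qed

lemma coord_mul_finite_expansion:
  assumes j: "j \<in> J"
  shows "\<exists>F. finite F \<and> F \<subseteq> J \<and>
           (\<forall>a\<in>carr A. \<forall>z\<in>carr A. f (amul A a z) j = (\<Sum>g\<in>F. f a g * f (amul A (basis_vec g) z) j))"
proof -
  have "continuous_map (prod_topology (topo A) (topo A)) euclidean (\<lambda>(a, z). f (amul A a z) j)"
    using continuous_map_compose[OF continuous_mul continuous_coord[OF j]]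
    by (simp add: o_def case_prod_unfold)
  then have "\<exists>F. finite F \<and> F \<subseteq> J \<and> (\<forall>a\<in>carr A. \<forall>z\<in>topspace (topo A).
      f (amul A a z) j = (\<Sum>g\<in>F. f a g * f (amul A (basis_vec g) z) j))"
    by (rule continuous_bihom_finite_expansion[where sc = "smul A" and base = "vzero A"])
       (use j in \<open>simp_all add: topspace_eq mul_add_left mul_smul_left mul_smul_right coord_add
          coord_smul mul_in smul_in continuous_smul_left smul_zero zero_in\<close>)
  then show ?thesis
    by (simp add: topspace_eq)
qed

lemma coord_mul_left_linear_combination:
  assumes G: "G \<in> carr A" and Q: "\<And>k. k \<in> K \<Longrightarrow> Q k \<in> carr A"
    and G_coords: "\<And>i. i \<in> J \<Longrightarrow> f G i = (\<Sum>k\<in>K. a k * f (Q k) i)"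
    and Z: "Z \<in> carr A" and j: "j \<in> J"
  shows "f (amul A Z G) j = (\<Sum>k\<in>K. a k * f (amul A Z (Q k)) j)"
proof -
  have "continuous_map (topo A) euclidean (\<lambda>x. f (amul A Z x) j)"
    using continuous_map_compose[OF continuous_map_fix_left[OF continuous_mul] continuous_coord[OF j]]
      Z topspace_eq by (simp add: o_def)
  then obtain I where I: "I \<subseteq> J"
    and expansion: "\<And>x. x \<in> carr A \<Longrightarrow> f (amul A Z x) j = (\<Sum>i\<in>I. f x i * f (amul A Z (basis_vec i)) j)"
    using continuous_functional_finite_expansion[of "\<lambda>x. f (amul A Z x) j"] j Z
    by (auto simp: mul_add_right mul_smul_right coord_add coord_smul mul_in)
  have "f (amul A Z G) j = (\<Sum>i\<in>I. (\<Sum>k\<in>K. a k * f (Q k) i) * f (amul A Z (basis_vec i)) j)"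
    using I by (auto simp: expansion[OF G] G_coords intro!: sum.cong)
  also have "\<dots> = (\<Sum>k\<in>K. a k * (\<Sum>i\<in>I. f (Q k) i * f (amul A Z (basis_vec i)) j))"
    by (simp add: sum_distrib_right sum_distrib_left mult.assoc sum.swap[of _ I])
  also have "\<dots> = (\<Sum>k\<in>K. a k * f (amul A Z (Q k)) j)"
    by (simp add: expansion Q)
  finally show ?thesis .
qed

lemma coord_apow_geometric_bound:
  assumes x: "x \<in> carr A" and j: "j \<in> J"
  shows "\<exists>M R. R \<ge> 0 \<and> (\<forall>n. norm (f (apow A x n) j) \<le> M * R ^ n)"
proof -
  obtain F where F: "finite F" "F \<subseteq> J"
    and expansion: "\<And>a z. a \<in> carr A \<Longrightarrow> z \<in> carr A \<Longrightarrow>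
                      f (amul A a z) j = (\<Sum>g\<in>F. f a g * f (amul A (basis_vec g) z) j)"
    using coord_mul_finite_expansion[OF j] by metis
  txt \<open>The finitely many numbers \<open>u n g\<close> determine the \<open>j\<close>-th coordinate of \<open>x\<^sup>n\<close> and obey a
    linear recurrence.\<close>
  define u where "u n g = f (amul A (basis_vec g) (apow A x n)) j" for n g
  define c where "c g g' = f (amul A (basis_vec g) x) g'" for g g'
  define R where "R = (\<Sum>g\<in>F. \<Sum>g'\<in>F. norm (c g g'))"
  define M where "M = (\<Sum>g\<in>F. norm (f (aone A) g)) * (\<Sum>g\<in>F. norm (u 0 g))"
  have "u (Suc n) g = (\<Sum>g'\<in>F. c g g' * u n g')" for n g
    unfolding u_def c_def
    by (simp add: mul_assoc[symmetric] basis_vec_in x apow_in expansion mul_in)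
  then have K_bound: "(\<Sum>g\<in>F. norm (u n g)) \<le> (\<Sum>g\<in>F. norm (u 0 g)) * R ^ n" for n
    unfolding R_def using linear_recurrence_norm_bound[OF F(1)] by blast
  have "norm (f (apow A x n) j) \<le> M * R ^ n" for n
  proof -
    have "f (apow A x n) j = (\<Sum>g\<in>F. f (aone A) g * u n g)"
      unfolding u_def using expansion[OF one_in apow_in[OF x]] one_mul[OF apow_in[OF x]] by simp
    then have "norm (f (apow A x n) j) \<le> (\<Sum>g\<in>F. norm (f (aone A) g * u n g))"
      by (simp add: norm_sum)
    also have "\<dots> = (\<Sum>g\<in>F. norm (f (aone A) g) * norm (u n g))"
      by (simp add: norm_mult)
    also have "\<dots> \<le> (\<Sum>g\<in>F. norm (f (aone A) g) * (\<Sum>g'\<in>F. norm (u n g')))"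
      by (intro sum_mono mult_left_mono member_le_sum) (auto simp: F(1))
    also have "\<dots> = (\<Sum>g\<in>F. norm (f (aone A) g)) * (\<Sum>g\<in>F. norm (u n g))"
      by (simp add: sum_distrib_right)
    also have "\<dots> \<le> M * R ^ n"
      unfolding M_def using K_bound by (simp add: mult_left_mono sum_nonneg mult.assoc)
    finally show ?thesis .
  qed
  moreover have "R \<ge> 0"
    unfolding R_def by (intro sum_nonneg) auto
  ultimately show ?thesis
    by blast
qed

lemma summable_coord_exp:
  assumes x: "x \<in> carr A" and j: "j \<in> J"
  shows "summable (\<lambda>n. norm (f (apow A x n) j * inverse (fact n)))"
proof -
  obtain M R where R: "\<And>n. norm (f (apow A x n) j) \<le> M * R ^ n"
    using coord_apow_geometric_bound[OF x j] by blast
  show ?thesis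
  proof (rule summable_comparison_test[OF _ summable_mult[OF summable_exp, of M R]], intro exI allI impI)
    show "norm (norm (f (apow A x n) j * inverse (fact n))) \<le> M * (inverse (fact n) * R ^ n)" for n
      using mult_right_mono[OF R[of n], of "inverse (fact n)"]
      by (simp add: norm_mult norm_inverse algebra_simps)
  qed
qed

definition aexp :: "'v \<Rightarrow> 'v" where
  "aexp x = of_coords (\<lambda>j. \<Sum>n. f (apow A x n) j * inverse (fact n))"

lemma aexp_in: "aexp x \<in> carr A"
  unfolding aexp_def by (rule of_coords_in)

lemma alg_hom_scalar_aexp:
  assumes \<psi>: "alg_hom A scalar_alg \<psi>" and x: "x \<in> carr A"
  shows "\<psi> (aexp x) = exp (\<psi> x)"
proof -
  have cont: "continuous_map (topo A) euclidean \<psi>"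
    and add: "\<And>a b. a \<in> carr A \<Longrightarrow> b \<in> carr A \<Longrightarrow> \<psi> (vadd A a b) = \<psi> a + \<psi> b"
    and hom: "\<And>c a. a \<in> carr A \<Longrightarrow> \<psi> (smul A c a) = c * \<psi> a"
    and mult: "\<And>a b. a \<in> carr A \<Longrightarrow> b \<in> carr A \<Longrightarrow> \<psi> (amul A a b) = \<psi> a * \<psi> b"
    and one: "\<psi> (aone A) = 1"
    using \<psi> unfolding alg_hom_def linear_on_def scalar_alg_def by simp_all
  have \<psi>_apow: "\<psi> (apow A x n) = \<psi> x ^ n" for n
    by (induction n) (simp_all add: one mult x apow_in)
  have "\<psi> (aexp x) = (\<Sum>n. \<psi> (apow A x n) * inverse (fact n))"
    unfolding aexp_def
    by (rule continuous_functional_coordinate_series(2)[OF cont add hom apow_in[OF x] summable_coord_exp[OF x]])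
  also have "\<dots> = exp (\<psi> x)"
    unfolding \<psi>_apow using exp_converges[of "\<psi> x"]
    by (simp add: scaleR_conv_of_real mult.commute sums_iff)
  finally show ?thesis .
qed

lemma coord_nonzero:
  assumes "x \<in> carr A" "x \<noteq> vzero A"
  obtains j where "j \<in> J" "f x j \<noteq> 0"
proof -
  have "\<not> (\<forall>j\<in>J. f x j = f (vzero A) j)"
    using coords_eqI[OF assms(1) zero_in] assms(2) by blast
  then show ?thesis
    using that coord_zero by auto
qed

lemma aexp_smul_ne_one:
  assumes x: "x \<in> carr A" and j: "j \<in> J" and nz: "f x j \<noteq> 0"
  shows "\<exists>t. aexp (smul A t x) \<noteq> aone A"
proof (rule ccontr)
  assume "\<not> (\<exists>t. aexp (smul A t x) \<noteq> aone A)"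
  then have const: "aexp (smul A t x) = aone A" for t
    by blast
  define c where "c n = f (apow A x n) j * inverse (fact n)" for n
  have series_term: "f (apow A (smul A t x) n) j * inverse (fact n) = c n * t ^ n" for t n
    unfolding c_def using apow_smul[OF x] coord_smul[OF apow_in[OF x] j] by simp
  have summable: "summable (\<lambda>n. c n * t ^ n)" for t
    using summable_norm_cancel[OF summable_coord_exp[OF smul_in[OF x] j]] by (simp add: series_term)
  have "f (aexp (smul A t x)) j = (\<Sum>n. c n * t ^ n)" for t
    unfolding aexp_def using j by (simp add: coord_of_coords series_term)
  then have "(\<lambda>t. \<Sum>n. c n * t ^ n) = (\<lambda>t. f (aone A) j)"
    using const by simp
  then have "((\<lambda>t. \<Sum>n. c n * t ^ n) has_field_derivative 0) (at 0)"
    by simp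
  moreover have "((\<lambda>t. \<Sum>n. c n * t ^ n) has_field_derivative (\<Sum>n. diffs c n * 0 ^ n)) (at 0)"
    by (rule termdiffs_strong_converges_everywhere[OF summable])
  ultimately have "(\<Sum>n. diffs c n * 0 ^ n) = 0"
    using DERIV_unique by blast
  moreover have "(\<Sum>n. diffs c n * 0 ^ n) = f x j"
    unfolding powser_zero by (simp add: diffs_def c_def mul_one[OF x])
  ultimately show False
    using nz by simp
qed

end

locale wc_comultiplication = U: wc_algebra_coords U JU fU + T: wc_algebra_coords T JT fT
  for U :: "('k::{real_normed_field,banach},'u) talg" and JU :: "'j set" and fU
    and T :: "('k,'t) talg" and JT :: "'i set" and fT +
  fixes tens :: "'u \<Rightarrow> 'u \<Rightarrow> 't" and gam :: "'u \<Rightarrow> 't"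
  assumes tensor: "wc_tensor_algebra U T tens"
    and gam_hom: "alg_hom U T gam"
begin

lemma tens_in: "a \<in> carr U \<Longrightarrow> b \<in> carr U \<Longrightarrow> tens a b \<in> carr T"
  using tensor by (simp add: wc_tensor_algebra_def cont_bilinear_def)

lemma tens_add_right:
  "a \<in> carr U \<Longrightarrow> b \<in> carr U \<Longrightarrow> c \<in> carr U \<Longrightarrow> tens c (vadd U a b) = vadd T (tens c a) (tens c b)"
  using tensor by (simp add: wc_tensor_algebra_def cont_bilinear_def linear_on_def)

lemma tens_add_left:
  "a \<in> carr U \<Longrightarrow> b \<in> carr U \<Longrightarrow> c \<in> carr U \<Longrightarrow> tens (vadd U a b) c = vadd T (tens a c) (tens b c)"
  using tensor by (simp add: wc_tensor_algebra_def cont_bilinear_def linear_on_def)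

lemma tens_smul_left: "a \<in> carr U \<Longrightarrow> c \<in> carr U \<Longrightarrow> tens (smul U s a) c = smul T s (tens a c)"
  using tensor by (simp add: wc_tensor_algebra_def cont_bilinear_def linear_on_def)

lemma tens_smul_right: "a \<in> carr U \<Longrightarrow> c \<in> carr U \<Longrightarrow> tens c (smul U s a) = smul T s (tens c a)"
  using tensor by (simp add: wc_tensor_algebra_def cont_bilinear_def linear_on_def)

lemma continuous_tens: "continuous_map (prod_topology (topo U) (topo U)) (topo T) (\<lambda>(x, y). tens x y)"
  using tensor by (simp add: wc_tensor_algebra_def cont_bilinear_def)

lemma tens_mul:
  "a \<in> carr U \<Longrightarrow> b \<in> carr U \<Longrightarrow> c \<in> carr U \<Longrightarrow> d \<in> carr U \<Longrightarrow>
     amul T (tens a b) (tens c d) = tens (amul U a c) (amul U b d)"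
  using tensor by (simp add: wc_tensor_algebra_def)

lemma tens_one: "tens (aone U) (aone U) = aone T"
  using tensor by (simp add: wc_tensor_algebra_def)

lemma gam_in: "a \<in> carr U \<Longrightarrow> gam a \<in> carr T"
  using gam_hom by (simp add: alg_hom_def linear_on_def)

lemma gam_add: "a \<in> carr U \<Longrightarrow> b \<in> carr U \<Longrightarrow> gam (vadd U a b) = vadd T (gam a) (gam b)"
  using gam_hom by (simp add: alg_hom_def linear_on_def)

lemma gam_smul: "a \<in> carr U \<Longrightarrow> gam (smul U c a) = smul T c (gam a)"
  using gam_hom by (simp add: alg_hom_def linear_on_def)

lemma gam_mul: "a \<in> carr U \<Longrightarrow> b \<in> carr U \<Longrightarrow> gam (amul U a b) = amul T (gam a) (gam b)"
  using gam_hom by (simp add: alg_hom_def)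

lemma gam_one: "gam (aone U) = aone T"
  using gam_hom by (simp add: alg_hom_def)

lemma continuous_gam: "continuous_map (topo U) (topo T) gam"
  using gam_hom by (simp add: alg_hom_def)

definition primitive :: "'u \<Rightarrow> bool" where
  "primitive y \<longleftrightarrow> gam y = vadd T (tens y (aone U)) (tens (aone U) y)"

lemma primitive_smul:
  assumes y: "y \<in> carr U" and "primitive y"
  shows "primitive (smul U t y)"
proof -
  have "gam (smul U t y) = smul T t (vadd T (tens y (aone U)) (tens (aone U) y))"
    using assms gam_smul unfolding primitive_def by simp
  also have "\<dots> = vadd T (smul T t (tens y (aone U))) (smul T t (tens (aone U) y))"
    using T.vector_space tens_in[OF y U.one_in] tens_in[OF U.one_in y]
    unfolding vector_space_on_def by blast
  finally show ?thesis
    unfolding primitive_def using y U.one_in by (simp add: tens_smul_left tens_smul_right)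
qed

lemma coord_comult_apow:
  assumes y: "y \<in> carr U" and prim: "primitive y" and \<rho>: "\<rho> \<in> JT"
  shows "fT (gam (apow U y n)) \<rho>
       = (\<Sum>k\<le>n. of_nat (n choose k) * fT (tens (apow U y k) (apow U y (n - k))) \<rho>)"
  using \<rho>
proof (induction n arbitrary: \<rho>)
  case 0
  then show ?case
    by (simp add: gam_one tens_one)
next
  case (Suc n)
  let ?G = "gam (apow U y n)" and ?P = "\<lambda>k l. tens (apow U y k) (apow U y l)"
  have one: "aone U \<in> carr U" and pow: "\<And>k. apow U y k \<in> carr U"
    using y U.one_in U.apow_in by auto
  have X: "tens y (aone U) \<in> carr T" and Y: "tens (aone U) y \<in> carr T"
    using tens_in y one by auto
  have G: "?G \<in> carr T"
    by (rule gam_in[OF pow])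
  have "gam (apow U y (Suc n)) = vadd T (amul T (tens y (aone U)) ?G) (amul T (tens (aone U) y) ?G)"
    using prim gam_mul[OF y pow] T.mul_add_left[OF X Y G] unfolding primitive_def by simp
  then have "fT (gam (apow U y (Suc n))) \<rho>
      = (\<Sum>k\<le>n. of_nat (n choose k) * fT (amul T (tens y (aone U)) (?P k (n - k))) \<rho>)
      + (\<Sum>k\<le>n. of_nat (n choose k) * fT (amul T (tens (aone U) y) (?P k (n - k))) \<rho>)"
    using Suc T.coord_add[OF T.mul_in[OF X G] T.mul_in[OF Y G]]
      T.coord_mul_left_linear_combination[OF G tens_in[OF pow pow], OF Suc.IH]
      X Y by simp
  also have "\<dots> = (\<Sum>k\<le>n. of_nat (n choose k) * (fT (?P (Suc k) (n - k)) \<rho> + fT (?P k (Suc n - k)) \<rho>))"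
    by (simp add: tens_mul y one pow U.one_mul Suc_diff_le sum.distrib distrib_left)
  also have "\<dots> = (\<Sum>k\<le>Suc n. of_nat (Suc n choose k) * fT (?P k (Suc n - k)) \<rho>)"
    by (rule binomial_sum_Suc[symmetric])
  finally show ?case .
qed

lemma coord_tens_finite_expansion:
  assumes \<rho>: "\<rho> \<in> JT"
  shows "\<exists>G. finite G \<and> G \<subseteq> JU \<and>
           (\<forall>a\<in>carr U. \<forall>z\<in>carr U. fT (tens a z) \<rho> = (\<Sum>g\<in>G. fU a g * fT (tens (U.basis_vec g) z) \<rho>))"
proof -
  have "continuous_map (prod_topology (topo U) (topo U)) euclidean (\<lambda>(a, z). fT (tens a z) \<rho>)"
    using continuous_map_compose[OF continuous_tens T.continuous_coord[OF \<rho>]]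
    by (simp add: o_def case_prod_unfold)
  then have "\<exists>G. finite G \<and> G \<subseteq> JU \<and> (\<forall>a\<in>carr U. \<forall>z\<in>topspace (topo U).
      fT (tens a z) \<rho> = (\<Sum>g\<in>G. fU a g * fT (tens (U.basis_vec g) z) \<rho>))"
    by (rule U.continuous_bihom_finite_expansion[where sc = "smul U" and base = "vzero U"])
       (use \<rho> in \<open>simp_all add: U.topspace_eq tens_add_left tens_smul_left tens_smul_right
          T.coord_add T.coord_smul tens_in U.smul_in U.continuous_smul_left U.smul_zero U.zero_in\<close>)
  then show ?thesis
    by (simp add: U.topspace_eq)
qed

lemma coord_comult_aexp:
  assumes y: "y \<in> carr U" and prim: "primitive y" and \<rho>: "\<rho> \<in> JT"
  shows "fT (gam (U.aexp y)) \<rho> = (\<Sum>n. \<Sum>k\<le>n.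
           fT (tens (apow U y k) (apow U y (n - k))) \<rho> * inverse (fact k * fact (n - k)))"
proof -
  have "continuous_map (topo U) euclidean (\<lambda>b. fT (gam b) \<rho>)"
    using continuous_map_compose[OF continuous_gam T.continuous_coord[OF \<rho>]] by (simp add: o_def)
  then have "fT (gam (U.aexp y)) \<rho> = (\<Sum>n. fT (gam (apow U y n)) \<rho> * inverse (fact n))"
    unfolding U.aexp_def
    by (rule U.continuous_functional_coordinate_series(2)[OF _ _ _ U.apow_in[OF y] U.summable_coord_exp[OF y]])
       (simp_all add: gam_add gam_smul T.coord_add T.coord_smul gam_in \<rho>)
  also have "\<dots> = (\<Sum>n. \<Sum>k\<le>n.
      fT (tens (apow U y k) (apow U y (n - k))) \<rho> * inverse (fact k * fact (n - k)))"
  proof (rule arg_cong[where f = suminf], rule ext)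
    fix n
    have "of_nat (n choose k) * inverse (fact n :: 'k) = inverse (fact k * fact (n - k))" if "k \<le> n" for k
      using binomial_fact[OF that, where 'a = 'k] by (simp add: field_simps)
    then show "fT (gam (apow U y n)) \<rho> * inverse (fact n) = (\<Sum>k\<le>n.
        fT (tens (apow U y k) (apow U y (n - k))) \<rho> * inverse (fact k * fact (n - k)))"
      unfolding coord_comult_apow[OF y prim \<rho>] sum_distrib_right
      by (intro sum.cong) (simp_all add: mult_ac)
  qed
  finally show ?thesis .
qed

lemma coord_tens_aexp:
  assumes y: "y \<in> carr U" and \<rho>: "\<rho> \<in> JT"
  shows "fT (tens (U.aexp y) (U.aexp y)) \<rho> = (\<Sum>n. \<Sum>k\<le>n.
           fT (tens (apow U y k) (apow U y (n - k))) \<rho> * inverse (fact k * fact (n - k)))"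
proof -
  obtain G where G: "finite G" "G \<subseteq> JU"
    and expansion: "\<And>b z. b \<in> carr U \<Longrightarrow> z \<in> carr U \<Longrightarrow>
                      fT (tens b z) \<rho> = (\<Sum>g\<in>G. fU b g * fT (tens (U.basis_vec g) z) \<rho>)"
    using coord_tens_finite_expansion[OF \<rho>] by metis
  have pow: "\<And>n. apow U y n \<in> carr U"
    by (rule U.apow_in[OF y])
  define \<alpha> where "\<alpha> g k = fU (apow U y k) g * inverse (fact k)" for g k
  define \<beta> where "\<beta> g l = fT (tens (U.basis_vec g) (apow U y l)) \<rho> * inverse (fact l)" for g l
  have cont_\<beta>: "continuous_map (topo U) euclidean (\<lambda>z. fT (tens (U.basis_vec g) z) \<rho>)" for g
    using continuous_map_compose[OF continuous_map_fix_left[OF continuous_tens] T.continuous_coord[OF \<rho>]]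
      U.basis_vec_in U.topspace_eq by (simp add: o_def)
  note series_\<beta> = U.continuous_functional_coordinate_series[OF cont_\<beta> _ _ pow U.summable_coord_exp[OF y]]
  have summable_\<alpha>: "summable (\<lambda>k. norm (\<alpha> g k))" if "g \<in> G" for g
    unfolding \<alpha>_def using that G by (intro U.summable_coord_exp[OF y]) blast
  have summable_\<beta>: "summable (\<lambda>l. norm (\<beta> g l))" for g
    unfolding \<beta>_def
    by (rule series_\<beta>(1)) (simp_all add: tens_add_right tens_smul_right T.coord_add T.coord_smul
          tens_in U.basis_vec_in \<rho>)
  have sum_\<alpha>: "fU (U.aexp y) g = (\<Sum>k. \<alpha> g k)" if "g \<in> G" for g
    using that G unfolding U.aexp_def \<alpha>_def by (auto simp: U.coord_of_coords)
  have sum_\<beta>: "fT (tens (U.basis_vec g) (U.aexp y)) \<rho> = (\<Sum>l. \<beta> g l)" for g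
    unfolding U.aexp_def \<beta>_def
    by (rule series_\<beta>(2)) (simp_all add: tens_add_right tens_smul_right T.coord_add T.coord_smul
          tens_in U.basis_vec_in \<rho>)
  have "fT (tens (U.aexp y) (U.aexp y)) \<rho> = (\<Sum>g\<in>G. (\<Sum>k. \<alpha> g k) * (\<Sum>l. \<beta> g l))"
    using expansion[OF U.aexp_in U.aexp_in] sum_\<alpha> sum_\<beta> by simp
  also have "\<dots> = (\<Sum>g\<in>G. \<Sum>n. \<Sum>k\<le>n. \<alpha> g k * \<beta> g (n - k))"
    using summable_\<alpha> summable_\<beta> by (intro sum.cong refl Cauchy_product)
  also have "\<dots> = (\<Sum>n. \<Sum>g\<in>G. \<Sum>k\<le>n. \<alpha> g k * \<beta> g (n - k))"
    using summable_\<alpha> summable_\<beta> by (intro suminf_sum[symmetric] summable_Cauchy_product)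
  also have "\<dots> = (\<Sum>n. \<Sum>k\<le>n. fT (tens (apow U y k) (apow U y (n - k))) \<rho> * inverse (fact k * fact (n - k)))"
  proof (rule arg_cong[where f = suminf], rule ext)
    fix n
    have "(\<Sum>g\<in>G. \<Sum>k\<le>n. \<alpha> g k * \<beta> g (n - k)) = (\<Sum>k\<le>n.
        (\<Sum>g\<in>G. fU (apow U y k) g * fT (tens (U.basis_vec g) (apow U y (n - k))) \<rho>)
        * inverse (fact k * fact (n - k)))"
      unfolding \<alpha>_def \<beta>_def
      by (subst sum.swap) (simp add: sum_distrib_left sum_distrib_right mult_ac)
    then show "(\<Sum>g\<in>G. \<Sum>k\<le>n. \<alpha> g k * \<beta> g (n - k)) = (\<Sum>k\<le>n.
        fT (tens (apow U y k) (apow U y (n - k))) \<rho> * inverse (fact k * fact (n - k)))"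
      by (simp only: expansion[OF pow pow, symmetric])
  qed
  finally show ?thesis .
qed

lemma comult_aexp:
  assumes "y \<in> carr U" "primitive y"
  shows "gam (U.aexp y) = tens (U.aexp y) (U.aexp y)"
  using assms
  by (intro T.coords_eqI gam_in tens_in U.aexp_in) (simp add: coord_comult_aexp coord_tens_aexp)

end

lemma wc_algebra_coords_exist:
  fixes A :: "('k::{real_normed_field,banach},'v,'z) talg_scheme"
  assumes "wc_algebra A"
  obtains J :: "'v set" and f where "wc_algebra_coords A J f"
proof -
  have wc: "weakly_complete A"
    using assms unfolding wc_algebra_def by blast
  then obtain J :: "'v set" and f where "linear_on A (power_space J) f"
    "bij_betw f (carr A) (carr (power_space J))" "homeomorphic_map (topo A) (topo (power_space J)) f"
    unfolding weakly_complete_def by blast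
  with wc assms show ?thesis
    using that unfolding wc_algebra_coords_def wc_algebra_coords_axioms_def wc_coords_def
      weakly_complete_def by blast
qed

lemma enveloping_algebra_image_nonzero:
  assumes "top_lie_algebra L" "carr L \<noteq> {vzero L}" "enveloping_algebra L U lam"
  obtains v where "v \<in> carr L" "lam v \<in> carr U" "lam v \<noteq> vzero U"
proof -
  have L: "vector_space_on L" and U: "vector_space_on U"
    using assms(1,3) unfolding top_lie_algebra_def enveloping_algebra_def wc_algebra_def
      weakly_complete_def tvs_def by blast+
  have lam: "lie_morphism_into L U lam" "inj_on lam (carr L)"
    using assms(3) unfolding enveloping_algebra_def by blast+
  have zero_L: "vzero L \<in> carr L"
    using L unfolding vector_space_on_def by blast
  then obtain v where v: "v \<in> carr L" "v \<noteq> vzero L"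
    using assms(2) by blast
  have lam_v: "lam v \<in> carr U"
    using lam(1) v(1) unfolding lie_morphism_into_def linear_on_def by blast
  have "lam (vzero L) = vzero U"
    using lam(1) vector_space_on_smul_zero[OF L v(1)] vector_space_on_smul_zero[OF U lam_v] v(1)
    unfolding lie_morphism_into_def linear_on_def by metis
  then have "lam v \<noteq> vzero U"
    using lam(2) v zero_L unfolding inj_on_def by metis
  then show ?thesis
    using that v(1) lam_v by blast
qed

theorem corollary3p6:
  fixes g :: "('k::{real_normed_field,banach}, 'g) tlie"
    and U :: "('k,'u) talg" and lam :: "'g \<Rightarrow> 'u"
    and T :: "('k,'t) talg" and tens :: "'u \<Rightarrow> 'u \<Rightarrow> 't"
    and gam :: "'u \<Rightarrow> 't" and cu :: "'u \<Rightarrow> 'k"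
  assumes "profinite_dim_lie g"
    and "carr g \<noteq> {vzero g}"
    and "enveloping_algebra g U lam"
    and "wc_tensor_algebra U T tens"
    and "alg_hom U T gam"
    and "\<forall>x\<in>carr g. gam (lam x) = vadd T (tens (lam x) (aone U)) (tens (aone U) (lam x))"
    and "alg_hom U scalar_alg cu"
    and "\<forall>x\<in>carr g. cu (lam x) = 0"
  shows "\<exists>a\<in>carr U. a \<noteq> aone U \<and> gam a = tens a a \<and> cu a = 1"
proof -
  have "top_lie_algebra g" "wc_algebra U" "wc_algebra T"
    using assms(1,3,4) unfolding profinite_dim_lie_def enveloping_algebra_def wc_tensor_algebra_def
    by blast+
  obtain v where v: "v \<in> carr g" "lam v \<in> carr U" "lam v \<noteq> vzero U"
    using enveloping_algebra_image_nonzero[OF \<open>top_lie_algebra g\<close> assms(2,3)] .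
  obtain JU :: "'u set" and fU where "wc_algebra_coords U JU fU"
    using wc_algebra_coords_exist[OF \<open>wc_algebra U\<close>] .
  moreover obtain JT :: "'t set" and fT where "wc_algebra_coords T JT fT"
    using wc_algebra_coords_exist[OF \<open>wc_algebra T\<close>] .
  ultimately interpret wc_comultiplication U JU fU T JT fT tens gam
    using assms(4,5) by (intro wc_comultiplication.intro wc_comultiplication_axioms.intro)
  obtain j where "j \<in> JU" "fU (lam v) j \<noteq> 0"
    using U.coord_nonzero v(2,3) by blast
  then obtain t where ne_one: "U.aexp (smul U t (lam v)) \<noteq> aone U"
    using U.aexp_smul_ne_one v(2) by blast
  define y where "y = smul U t (lam v)"
  have "primitive (lam v)"
    using assms(6) v(1) unfolding primitive_def by blast
  then have y: "y \<in> carr U" "primitive y"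
    unfolding y_def using v(2) by (simp_all add: U.smul_in primitive_smul)
  have "cu y = 0"
    using assms(7,8) v(1,2) unfolding y_def alg_hom_def linear_on_def scalar_alg_def by simp
  then have "cu (U.aexp y) = 1"
    using U.alg_hom_scalar_aexp[OF assms(7) y(1)] by simp
  then show ?thesis
    using U.aexp_in ne_one comult_aexp[OF y] unfolding y_def by blast
qed
end
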